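(* Among the grid graphs $P_m \Box P_n$ with $2 \leq m \leq n$, the only diametrical one is $P_2 \Box P_2$.
   Context: $P_k$ is the path on $k$ vertices and $\Box$ the Cartesian product of graphs. Let $G=(V,E)$ be a finite connected graph with distance $d(u,v)$, eccentricity $e(v)=\max_w d(v,w)$ and diameter $\mathrm{diam}(G)=\max_v e(v)$. A broadcast is a function $f: V\to\{0,\dots,\mathrm{diam}(G)\}$ with $f(v)\le e(v)$; its cost is $\sum_v f(v)$; it is dominating if every $u$ has some $v$ with $f(v)\ge 1$ and $d(u,v)\le f(v)$; a dominating broadcast is minimal if decreasing $f(v)$ for any $v$ with $f(v)>0$ destroys domination. $\Gamma_b(G)$ is the maximum cost of a minimal dominating broadcast, and $G$ is called diametrical if $\Gamma_b(G)=\mathrm{diam}(G)$. *)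

theory Defs
  imports Main
begin

definition is_walk :: "'a set \<Rightarrow> ('a \<Rightarrow> 'a \<Rightarrow> bool) \<Rightarrow> 'a list \<Rightarrow> bool" where
  "is_walk V E p \<longleftrightarrow> p \<noteq> [] \<and> set p \<subseteq> V \<and> (\<forall>i. Suc i < length p \<longrightarrow> E (p ! i) (p ! Suc i))"

definition gdist :: "'a set \<Rightarrow> ('a \<Rightarrow> 'a \<Rightarrow> bool) \<Rightarrow> 'a \<Rightarrow> 'a \<Rightarrow> nat" where
  "gdist V E u v = (LEAST k. \<exists>p. is_walk V E p \<and> hd p = u \<and> last p = v \<and> length p = Suc k)"

definition ecc :: "'a set \<Rightarrow> ('a \<Rightarrow> 'a \<Rightarrow> bool) \<Rightarrow> 'a \<Rightarrow> nat" where
  "ecc V E v = Max ((\<lambda>w. gdist V E v w) ` V)"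

definition diam :: "'a set \<Rightarrow> ('a \<Rightarrow> 'a \<Rightarrow> bool) \<Rightarrow> nat" where
  "diam V E = Max (ecc V E ` V)"

definition is_broadcast :: "'a set \<Rightarrow> ('a \<Rightarrow> 'a \<Rightarrow> bool) \<Rightarrow> ('a \<Rightarrow> nat) \<Rightarrow> bool" where
  "is_broadcast V E f \<longleftrightarrow> (\<forall>v\<in>V. f v \<le> diam V E \<and> f v \<le> ecc V E v)"

definition bcost :: "'a set \<Rightarrow> ('a \<Rightarrow> nat) \<Rightarrow> nat" where
  "bcost V f = (\<Sum>v\<in>V. f v)"

definition dominating :: "'a set \<Rightarrow> ('a \<Rightarrow> 'a \<Rightarrow> bool) \<Rightarrow> ('a \<Rightarrow> nat) \<Rightarrow> bool" where
  "dominating V E f \<longleftrightarrow> (\<forall>u\<in>V. \<exists>v\<in>V. f v \<ge> 1 \<and> gdist V E u v \<le> f v)"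

definition minimal_dominating_broadcast :: "'a set \<Rightarrow> ('a \<Rightarrow> 'a \<Rightarrow> bool) \<Rightarrow> ('a \<Rightarrow> nat) \<Rightarrow> bool" where
  "minimal_dominating_broadcast V E f \<longleftrightarrow>
     is_broadcast V E f \<and> dominating V E f \<and>
     (\<forall>v\<in>V. \<forall>k < f v. \<not> dominating V E (f(v := k)))"

definition upper_broadcast_number :: "'a set \<Rightarrow> ('a \<Rightarrow> 'a \<Rightarrow> bool) \<Rightarrow> nat" where
  "upper_broadcast_number V E =
     Max {bcost V f | f. minimal_dominating_broadcast V E f}"

definition diametrical :: "'a set \<Rightarrow> ('a \<Rightarrow> 'a \<Rightarrow> bool) \<Rightarrow> bool" where
  "diametrical V E \<longleftrightarrow> upper_broadcast_number V E = diam V E"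

definition path_V :: "nat \<Rightarrow> nat set" where "path_V k = {0..<k}"
definition path_E :: "nat \<Rightarrow> nat \<Rightarrow> bool" where "path_E i j \<longleftrightarrow> i + 1 = j \<or> j + 1 = i"

definition box_V :: "'a set \<Rightarrow> 'b set \<Rightarrow> ('a \<times> 'b) set" where "box_V V1 V2 = V1 \<times> V2"
definition box_E :: "('a \<Rightarrow> 'a \<Rightarrow> bool) \<Rightarrow> ('b \<Rightarrow> 'b \<Rightarrow> bool) \<Rightarrow> ('a \<times> 'b) \<Rightarrow> ('a \<times> 'b) \<Rightarrow> bool" where
  "box_E E1 E2 x y \<longleftrightarrow> (fst x = fst y \<and> E2 (snd x) (snd y)) \<or> (snd x = snd y \<and> E1 (fst x) (fst y))"

end

theory Submission
  imports Defs
begin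

text \<open>Distances in the grid are Manhattan distances, so its diameter is m + n - 2.
For m \<ge> 3 the checkerboard broadcast (strength 1 on the vertices of even coordinate sum) is
minimal dominating, because no two of its broadcasters are adjacent, and it costs at least mn/2,
which exceeds m + n - 2. For m = 2 < n the two vertices of the far rung of the ladder, each
broadcasting n - 1, form a minimal dominating broadcast of cost 2(n - 1) > n. On the 4-cycle
P2 \<box> P2 a broadcaster of strength 2 = diam must dominate alone, and otherwise a private vertex
of any broadcaster is adjacent to every vertex but its antipode, which leaves room for at most
one further broadcaster; so every minimal dominating broadcast costs at most 2.\<close>

lemma is_walk_Cons:
  "is_walk V E (x # p) \<longleftrightarrow> x \<in> V \<and> (p = [] \<or> E x (hd p) \<and> is_walk V E p)"
proof (cases p)
  case (Cons y q)
  have "(\<forall>i. Suc i < length (x # p) \<longrightarrow> E ((x # p) ! i) ((x # p) ! Suc i)) \<longleftrightarrow>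
        E x y \<and> (\<forall>i. Suc i < length p \<longrightarrow> E (p ! i) (p ! Suc i))"
    unfolding Cons by (auto simp: nth_Cons split: nat.splits)
  then show ?thesis using Cons by (auto simp: is_walk_def)
qed (simp add: is_walk_def)

lemma walk_length_gt_metric:
  assumes "\<And>x. d x x = 0" and "\<And>x y z. d x z \<le> d x y + d y z" and "\<And>x y. E x y \<Longrightarrow> d x y \<le> 1"
    and "is_walk V E p"
  shows "d (hd p) (last p) < length p"
  using assms(4)
proof (induction p)
  case (Cons x p)
  show ?case
  proof (cases "p = []")
    case False
    then have "E x (hd p)" and "d (hd p) (last p) < length p"
      using Cons by (auto simp: is_walk_Cons)
    moreover have "d x (last p) \<le> d x (hd p) + d (hd p) (last p)" by (rule assms(2))
    ultimately show ?thesis using assms(3) False by fastforce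
  qed (simp add: assms(1))
qed (simp add: is_walk_def)

lemma gdist_eqI:
  assumes "\<And>x. d x x = 0" and "\<And>x y z. d x z \<le> d x y + d y z" and "\<And>x y. E x y \<Longrightarrow> d x y \<le> 1"
    and "is_walk V E p" "hd p = u" "last p = v" "length p = Suc (d u v)"
  shows "gdist V E u v = d u v"
  unfolding gdist_def
proof (rule Least_equality)
  fix k assume "\<exists>q. is_walk V E q \<and> hd q = u \<and> last q = v \<and> length q = Suc k"
  then show "d u v \<le> k" using walk_length_gt_metric[OF assms(1-3)] by fastforce
qed (use assms(4-7) in blast)

lemma gdist_le_ecc: "finite V \<Longrightarrow> w \<in> V \<Longrightarrow> gdist V E v w \<le> ecc V E v"
  unfolding ecc_def by (rule Max_ge) auto

lemma ecc_le_diam: "finite V \<Longrightarrow> v \<in> V \<Longrightarrow> ecc V E v \<le> diam V E"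
  unfolding diam_def by (rule Max_ge) auto

lemma gdist_le_diam: "finite V \<Longrightarrow> v \<in> V \<Longrightarrow> w \<in> V \<Longrightarrow> gdist V E v w \<le> diam V E"
  using gdist_le_ecc ecc_le_diam order_trans by metis

lemma is_broadcastI:
  assumes "finite V" and "\<And>v. v \<in> V \<Longrightarrow> \<exists>w\<in>V. f v \<le> gdist V E v w"
  shows "is_broadcast V E f"
  unfolding is_broadcast_def using assms gdist_le_ecc gdist_le_diam order_trans by metis

lemma bcost_le_upper_broadcast_number:
  assumes "minimal_dominating_broadcast V E f"
  shows "bcost V f \<le> upper_broadcast_number V E"
proof -
  have "{bcost V g |g. minimal_dominating_broadcast V E g} \<subseteq> {..card V * diam V E}"
    by (auto simp: bcost_def minimal_dominating_broadcast_def is_broadcast_def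
             intro!: sum_bounded_above[where K = "diam V E", simplified])
  then have "finite {bcost V g |g. minimal_dominating_broadcast V E g}"
    using finite_subset by blast
  then show ?thesis unfolding upper_broadcast_number_def by (rule Max_ge) (use assms in blast)
qed

lemma upper_broadcast_number_le:
  assumes "minimal_dominating_broadcast V E f"
    and "\<And>g. minimal_dominating_broadcast V E g \<Longrightarrow> bcost V g \<le> c"
  shows "upper_broadcast_number V E \<le> c"
proof -
  have "{bcost V g |g. minimal_dominating_broadcast V E g} \<subseteq> {..c}" using assms(2) by auto
  then have "finite {bcost V g |g. minimal_dominating_broadcast V E g}" using finite_subset by blast
  then show ?thesis unfolding upper_broadcast_number_def using assms by (subst Max_le_iff) auto
qed

lemma minimal_dominating_broadcast_private_vertex:
  assumes "minimal_dominating_broadcast V E f" and "v \<in> V" and "0 < f v"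
  obtains u where "u \<in> V" and "\<And>w. w \<in> V \<Longrightarrow> w \<noteq> v \<Longrightarrow> 0 < f w \<Longrightarrow> f w < gdist V E u w"
proof -
  have "\<not> dominating V E (f(v := f v - 1))"
    using assms unfolding minimal_dominating_broadcast_def by auto
  then obtain u where u: "u \<in> V"
    and undominated: "\<forall>w\<in>V. 1 \<le> (f(v := f v - 1)) w \<longrightarrow> (f(v := f v - 1)) w < gdist V E u w"
    unfolding dominating_def by (meson not_le)
  show thesis
  proof (rule that[OF u])
    fix w assume "w \<in> V" "w \<noteq> v" "0 < f w"
    then show "f w < gdist V E u w" using undominated[rule_format, of w] by simp
  qed
qed

lemma minimal_dominating_broadcast_diam_vertex_alone:
  assumes "finite V" and f: "minimal_dominating_broadcast V E f"
    and "v \<in> V" "0 < f v" "diam V E \<le> f v" and "w \<in> V" "w \<noteq> v"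
  shows "f w = 0"
proof (rule ccontr)
  assume "f w \<noteq> 0"
  then obtain u where "u \<in> V" and "f v < gdist V E u v"
    using minimal_dominating_broadcast_private_vertex[OF f \<open>w \<in> V\<close>] assms by (metis gr0I)
  moreover have "gdist V E u v \<le> diam V E" if "u \<in> V" using gdist_le_diam assms that by metis
  ultimately show False using assms(5) by linarith
qed

abbreviation grid_V :: "nat \<Rightarrow> nat \<Rightarrow> (nat \<times> nat) set" where
  "grid_V m n \<equiv> box_V (path_V m) (path_V n)"

abbreviation grid_E :: "nat \<times> nat \<Rightarrow> nat \<times> nat \<Rightarrow> bool" where
  "grid_E \<equiv> box_E path_E path_E"

lemma grid_V_eq: "grid_V m n = {0..<m} \<times> {0..<n}"
  by (simp add: box_V_def path_V_def)

lemma finite_grid_V: "finite (grid_V m n)"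
  by (simp add: grid_V_eq)

definition manhattan :: "nat \<times> nat \<Rightarrow> nat \<times> nat \<Rightarrow> nat" where
  "manhattan x y = (fst x - fst y) + (fst y - fst x) + ((snd x - snd y) + (snd y - snd x))"

lemma manhattan_triangle: "manhattan x z \<le> manhattan x y + manhattan y z"
proof -
  have absdiff_triangle: "(a - c) + (c - a) \<le> ((a - b) + (b - a)) + ((b - c) + (c - b))" for a b c :: nat
    by arith
  show ?thesis
    using add_mono[OF absdiff_triangle[of "fst x" "fst z" "fst y"] absdiff_triangle[of "snd x" "snd z" "snd y"]]
    unfolding manhattan_def by (simp add: ac_simps)
qed

lemma manhattan_grid_E: "grid_E x y \<Longrightarrow> manhattan x y = 1"
  by (auto simp: box_E_def path_E_def manhattan_def)

lemma grid_walk_exists: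
  assumes "x \<in> grid_V m n" "y \<in> grid_V m n"
  shows "\<exists>p. is_walk (grid_V m n) grid_E p \<and> hd p = x \<and> last p = y \<and> length p = Suc (manhattan x y)"
  using assms
proof (induction "manhattan x y" arbitrary: x)
  case 0
  then have "x = y" by (auto simp: manhattan_def prod_eq_iff)
  then show ?case using 0 by (intro exI[of _ "[x]"]) (auto simp: is_walk_def)
next
  case (Suc d)
  obtain a b where x: "x = (a, b)" by (cases x)
  obtain c e where y: "y = (c, e)" by (cases y)
  define x' where "x' = (if a < c then (a + 1, b) else if c < a then (a - 1, b)
                         else if b < e then (a, b + 1) else (a, b - 1))"
  have step: "x' \<in> grid_V m n" "grid_E x x'" "manhattan x' y = d"
    using Suc unfolding x y x'_def by (auto simp: grid_V_eq manhattan_def box_E_def path_E_def)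
  then obtain p where "is_walk (grid_V m n) grid_E p" "hd p = x'" "last p = y" "length p = Suc d"
    using Suc by blast
  then show ?case using Suc.hyps(2) Suc.prems step
    by (intro exI[of _ "x # p"]) (auto simp: is_walk_Cons)
qed

lemma gdist_grid:
  assumes "x \<in> grid_V m n" "y \<in> grid_V m n"
  shows "gdist (grid_V m n) grid_E x y = manhattan x y"
proof -
  obtain p where "is_walk (grid_V m n) grid_E p" "hd p = x" "last p = y" "length p = Suc (manhattan x y)"
    using grid_walk_exists[OF assms] by blast
  then show ?thesis
    by (intro gdist_eqI[where d = manhattan] manhattan_triangle eq_imp_le manhattan_grid_E)
       (simp_all add: manhattan_def)
qed

lemma diam_grid:
  assumes "1 \<le> m" "1 \<le> n"
  shows "diam (grid_V m n) grid_E = (m - 1) + (n - 1)"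
proof (rule antisym)
  have "ecc (grid_V m n) grid_E v \<le> (m - 1) + (n - 1)" if "v \<in> grid_V m n" for v
    using that assms unfolding ecc_def
    by (subst Max_le_iff) (auto simp: finite_grid_V gdist_grid, auto simp: grid_V_eq manhattan_def)
  then show "diam (grid_V m n) grid_E \<le> (m - 1) + (n - 1)"
    using assms unfolding diam_def by (subst Max_le_iff) (auto simp: finite_grid_V grid_V_eq)
next
  have corners: "(0, 0) \<in> grid_V m n" "(m - 1, n - 1) \<in> grid_V m n"
    using assms by (auto simp: grid_V_eq)
  then have "(m - 1) + (n - 1) = gdist (grid_V m n) grid_E (0, 0) (m - 1, n - 1)"
    by (simp add: gdist_grid manhattan_def)
  also have "\<dots> \<le> diam (grid_V m n) grid_E"
    using gdist_le_diam[OF finite_grid_V] corners by metis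
  finally show "(m - 1) + (n - 1) \<le> diam (grid_V m n) grid_E" .
qed

definition checkerboard :: "nat \<times> nat \<Rightarrow> nat" where
  "checkerboard x = (if even (fst x + snd x) then 1 else 0)"

lemma manhattan_le_1_same_parity_imp_eq:
  assumes "manhattan v w \<le> 1" and "even (fst v + snd v) \<longleftrightarrow> even (fst w + snd w)"
  shows "v = w"
proof (rule ccontr)
  assume "v \<noteq> w"
  then have "fst v = fst w \<and> (snd v = Suc (snd w) \<or> snd w = Suc (snd v)) \<or>
             snd v = snd w \<and> (fst v = Suc (fst w) \<or> fst w = Suc (fst v))"
    using assms(1) by (auto simp: manhattan_def prod_eq_iff)
  then show False using assms(2) by auto
qed

lemma minimal_dominating_checkerboard:
  assumes "2 \<le> m" and "1 \<le> n"
  shows "minimal_dominating_broadcast (grid_V m n) grid_E checkerboard"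
  unfolding minimal_dominating_broadcast_def
proof (intro conjI ballI allI impI)
  show "is_broadcast (grid_V m n) grid_E checkerboard"
  proof (rule is_broadcastI[OF finite_grid_V])
    fix v assume v: "v \<in> grid_V m n"
    define w where "w = (if fst v = 0 then 1 else 0 :: nat, snd v)"
    have "w \<in> grid_V m n" and "checkerboard v \<le> manhattan v w"
      using v assms by (auto simp: w_def grid_V_eq checkerboard_def manhattan_def)
    then show "\<exists>w\<in>grid_V m n. checkerboard v \<le> gdist (grid_V m n) grid_E v w"
      using v by (auto simp: gdist_grid)
  qed
next
  show "dominating (grid_V m n) grid_E checkerboard"
    unfolding dominating_def
  proof
    fix u assume u: "u \<in> grid_V m n"
    define v where "v = (if even (fst u + snd u) then u
                         else (if fst u = 0 then 1 else fst u - 1, snd u))"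
    have "v \<in> grid_V m n" and "checkerboard v = 1" and "manhattan u v \<le> 1"
      using u assms by (auto simp: v_def grid_V_eq checkerboard_def manhattan_def elim: oddE)
    then show "\<exists>v\<in>grid_V m n. 1 \<le> checkerboard v \<and> gdist (grid_V m n) grid_E u v \<le> checkerboard v"
      using u by (intro bexI[of _ v]) (auto simp: gdist_grid)
  qed
next
  fix v k assume v: "v \<in> grid_V m n" and "k < checkerboard v"
  then have k: "k = 0" and v_even: "even (fst v + snd v)" by (auto simp: checkerboard_def split: if_splits)
  show "\<not> dominating (grid_V m n) grid_E (checkerboard(v := k))"
  proof
    assume "dominating (grid_V m n) grid_E (checkerboard(v := k))"
    then obtain w where "w \<in> grid_V m n" "1 \<le> (checkerboard(v := k)) w"
      and "gdist (grid_V m n) grid_E v w \<le> (checkerboard(v := k)) w"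
      using v unfolding dominating_def by blast
    then have "w \<noteq> v" and "even (fst w + snd w)" and "manhattan v w \<le> 1"
      using k v by (auto simp: gdist_grid checkerboard_def split: if_splits)
    then show False using manhattan_le_1_same_parity_imp_eq v_even by metis
  qed
qed

lemma double_sum_ge_if_consecutive_sums_const:
  fixes g :: "nat \<Rightarrow> nat"
  assumes "\<And>i. g i + g (Suc i) = c" and "c \<le> 2 * g 0"
  shows "k * c \<le> 2 * (\<Sum>i<k. g i)"
proof (induction k rule: nat_induct2)
  case (step k)
  have "(\<Sum>i<k + 2. g i) = (\<Sum>i<k. g i) + c" using assms(1)[of k] by simp
  then show ?case using step by simp
qed (use assms(2) in simp_all)

lemma bcost_checkerboard: "m * n \<le> 2 * bcost (grid_V m n) checkerboard"
proof -
  define row where "row i = (\<Sum>j<n. if even (i + j) then 1 else 0 :: nat)" for i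
  have "bcost (grid_V m n) checkerboard = (\<Sum>i<m. row i)"
    unfolding bcost_def grid_V_eq row_def checkerboard_def atLeast0LessThan sum.cartesian_product' by simp
  moreover have "row i + row (Suc i) = n" for i
  proof -
    have "row i + row (Suc i) = (\<Sum>j<n. 1)"
      unfolding row_def sum.distrib[symmetric] by (rule sum.cong) auto
    then show ?thesis by simp
  qed
  moreover have "n * 1 \<le> 2 * row 0"
    unfolding row_def by (rule double_sum_ge_if_consecutive_sums_const) simp_all
  ultimately show ?thesis using double_sum_ge_if_consecutive_sums_const[of row n] by simp
qed

definition end_rung_broadcast :: "nat \<Rightarrow> nat \<times> nat \<Rightarrow> nat" where
  "end_rung_broadcast n x = (if snd x = n - 1 then n - 1 else 0)"

lemma minimal_dominating_end_rung_broadcast: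
  assumes "2 \<le> n"
  shows "minimal_dominating_broadcast (grid_V 2 n) grid_E (end_rung_broadcast n)"
  unfolding minimal_dominating_broadcast_def
proof (intro conjI ballI allI impI)
  show "is_broadcast (grid_V 2 n) grid_E (end_rung_broadcast n)"
  proof (rule is_broadcastI[OF finite_grid_V])
    fix v assume v: "v \<in> grid_V 2 n"
    have "(1 - fst v, 0) \<in> grid_V 2 n" and "end_rung_broadcast n v \<le> manhattan v (1 - fst v, 0)"
      using v assms by (auto simp: grid_V_eq end_rung_broadcast_def manhattan_def)
    then show "\<exists>w\<in>grid_V 2 n. end_rung_broadcast n v \<le> gdist (grid_V 2 n) grid_E v w"
      using v by (intro bexI[of _ "(1 - fst v, 0)"]) (auto simp: gdist_grid)
  qed
next
  show "dominating (grid_V 2 n) grid_E (end_rung_broadcast n)"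
    unfolding dominating_def
  proof
    fix u assume u: "u \<in> grid_V 2 n"
    have "(fst u, n - 1) \<in> grid_V 2 n" and "manhattan u (fst u, n - 1) \<le> n - 1"
      using u assms by (auto simp: grid_V_eq manhattan_def)
    then show "\<exists>v\<in>grid_V 2 n. 1 \<le> end_rung_broadcast n v \<and>
                 gdist (grid_V 2 n) grid_E u v \<le> end_rung_broadcast n v"
      using u assms by (intro bexI[of _ "(fst u, n - 1)"]) (auto simp: gdist_grid end_rung_broadcast_def)
  qed
next
  fix v k assume v: "v \<in> grid_V 2 n" and k: "k < end_rung_broadcast n v"
  then have v_end: "snd v = n - 1" and "k < n - 1" by (auto simp: end_rung_broadcast_def split: if_splits)
  \<comment> \<open>The vertex at the other end of the row of v is dominated only by v.\<close>
  have u: "(fst v, 0) \<in> grid_V 2 n" using v by (auto simp: grid_V_eq)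
  show "\<not> dominating (grid_V 2 n) grid_E ((end_rung_broadcast n)(v := k))"
  proof
    assume "dominating (grid_V 2 n) grid_E ((end_rung_broadcast n)(v := k))"
    then obtain w where "w \<in> grid_V 2 n" "1 \<le> ((end_rung_broadcast n)(v := k)) w"
      and "manhattan (fst v, 0) w \<le> ((end_rung_broadcast n)(v := k)) w"
      using u unfolding dominating_def by (auto simp: gdist_grid[OF u])
    then show False using v v_end \<open>k < n - 1\<close>
      by (cases w) (auto simp: grid_V_eq manhattan_def end_rung_broadcast_def split: if_splits)
  qed
qed

lemma bcost_end_rung_broadcast:
  assumes "1 \<le> n"
  shows "bcost (grid_V 2 n) (end_rung_broadcast n) = 2 * (n - 1)"
proof -
  have "bcost (grid_V 2 n) (end_rung_broadcast n) = (\<Sum>i<2::nat. \<Sum>j<n. if j = n - 1 then n - 1 else 0)"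
    unfolding bcost_def grid_V_eq end_rung_broadcast_def atLeast0LessThan sum.cartesian_product' by simp
  also have "\<dots> = 2 * (n - 1)" using assms by simp
  finally show ?thesis .
qed

lemma bcost_minimal_dominating_2x2_le:
  assumes f: "minimal_dominating_broadcast (grid_V 2 2) grid_E f"
  shows "bcost (grid_V 2 2) f \<le> 2"
proof (cases "\<exists>v\<in>grid_V 2 2. 2 \<le> f v")
  case True
  then obtain v where v: "v \<in> grid_V 2 2" "2 \<le> f v" by blast
  have diam: "diam (grid_V 2 2) grid_E = 2" using diam_grid[of 2 2] by simp
  have "f w = 0" if "w \<in> grid_V 2 2 - {v}" for w
    using minimal_dominating_broadcast_diam_vertex_alone[OF finite_grid_V f v(1)] v that diam by auto
  then have "bcost (grid_V 2 2) f = f v"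
    unfolding bcost_def using v(1) finite_grid_V by (simp add: sum.remove)
  also have "\<dots> \<le> 2" using f v(1) diam by (auto simp: minimal_dominating_broadcast_def is_broadcast_def)
  finally show ?thesis .
next
  case False
  define S where "S = {v \<in> grid_V 2 2. 0 < f v}"
  have "bcost (grid_V 2 2) f = sum f S"
    unfolding bcost_def S_def by (rule sum.mono_neutral_right) (auto simp: finite_grid_V)
  also have "\<dots> \<le> card S" using False S_def sum_bounded_above[of S f 1] by force
  also have "card S \<le> 2"
  proof (cases "S = {}")
    case False
    then obtain w where "w \<in> grid_V 2 2" "0 < f w" using S_def by blast
    then obtain u where u: "u \<in> grid_V 2 2"
      and u_private: "\<And>x. x \<in> grid_V 2 2 \<Longrightarrow> x \<noteq> w \<Longrightarrow> 0 < f x \<Longrightarrow> f x < gdist (grid_V 2 2) grid_E u x"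
      using minimal_dominating_broadcast_private_vertex[OF f] by metis
    \<comment> \<open>In the 4-cycle only the antipode of u lies at distance 2 from u.\<close>
    have "S \<subseteq> {w, (1 - fst u, 1 - snd u)}"
    proof
      fix x assume x: "x \<in> S"
      show "x \<in> {w, (1 - fst u, 1 - snd u)}"
      proof (cases "x = w")
        case False
        then have "1 < manhattan u x"
          using u_private[of x] x u False \<open>\<not> (\<exists>v\<in>grid_V 2 2. 2 \<le> f v)\<close>
          by (auto simp: S_def gdist_grid)
        then show ?thesis using x u by (cases u; cases x) (auto simp: S_def grid_V_eq manhattan_def)
      qed simp
    qed
    then have "card S \<le> card {w, (1 - fst u, 1 - snd u)}" by (rule card_mono[rotated]) simp
    also have "\<dots> \<le> 2" by (simp add: card_insert_if)
    finally show ?thesis .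
  qed simp
  finally show ?thesis .
qed

theorem mainTheorem14:
  fixes m n :: nat
  assumes "2 \<le> m" and "m \<le> n"
  shows "diametrical (box_V (path_V m) (path_V n)) (box_E path_E path_E) \<longleftrightarrow> m = 2 \<and> n = 2"
proof
  assume "diametrical (grid_V m n) grid_E"
  then have upper: "upper_broadcast_number (grid_V m n) grid_E = (m - 1) + (n - 1)"
    using diam_grid assms by (simp add: diametrical_def)
  show "m = 2 \<and> n = 2"
  proof (rule ccontr)
    assume "\<not> (m = 2 \<and> n = 2)"
    then consider "m = 2" "3 \<le> n" | "3 \<le> m" "3 \<le> n" using assms by linarith
    then show False
    proof cases
      case 1
      then show False
        using bcost_le_upper_broadcast_number[OF minimal_dominating_end_rung_broadcast, of n]
          bcost_end_rung_broadcast[of n] upper by simp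
    next
      case 2
      then obtain a b where "m = a + 3" and "n = b + 3" by (metis add.commute le_iff_add)
      then have "2 * ((m - 1) + (n - 1)) < m * n" by (simp add: algebra_simps)
      then show False
        using bcost_le_upper_broadcast_number[OF minimal_dominating_checkerboard[of m n]]
          bcost_checkerboard[of m n] upper 2 by simp
    qed
  qed
next
  assume "m = 2 \<and> n = 2"
  moreover have "upper_broadcast_number (grid_V 2 2) grid_E = 2"
    using upper_broadcast_number_le[OF minimal_dominating_end_rung_broadcast bcost_minimal_dominating_2x2_le]
      bcost_le_upper_broadcast_number[OF minimal_dominating_end_rung_broadcast, of 2]
      bcost_end_rung_broadcast[of 2] by simp
  ultimately show "diametrical (grid_V m n) grid_E"
    using diam_grid[of 2 2] by (simp add: diametrical_def)
qed

end
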